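(* Let $n\ge2$. Then $\Gamma^k=\Gamma^{n-k}$ for all $k=1,\dots,n-1$.
   Context: Let $\mathrm{C}$ be either the real Clifford algebra $C\ell_{p,q}$ with $p+q=n$, or the complex Clifford algebra $C\ell(\mathbb{C}^n)$. It has identity $e$ and generators $e_1,\dots,e_n$ satisfying $e_ae_b+e_be_a=2\eta_{ab}e$. In the real case $\eta=\mathrm{diag}(1,\dots,1,-1,\dots,-1)$ with $p$ entries $+1$ and $q$ entries $-1$. In the complex case $\eta=I_n$. $\mathrm{C}^k$ is the grade-$k$ subspace, spanned by the products $e_{a_1}\cdots e_{a_k}$ with $a_1<\dots<a_k$. $\mathrm{C}^\times$ is the group of invertible elements. $\Gamma^k=\{T\in\mathrm{C}^\times: T\,\mathrm{C}^k\,T^{-1}\subseteq\mathrm{C}^k\}$. *)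

theory Defs
  imports Complex_Main
begin

text \<open>Concrete model of the Clifford algebra on generators e_0,...,e_(n-1) with
  e_a e_b + e_b e_a = 2 eta(a,b) e, eta diagonal with entries eta a.
  An element is a coefficient function on basis blades e_A, A a subset of {0..<n}
  (e_A = product of e_a for a in A in increasing order; e_{} = e).\<close>

definition cl_carrier :: "nat \<Rightarrow> (nat set \<Rightarrow> 'a::field) set" where
  "cl_carrier n = {x. \<forall>A. \<not> A \<subseteq> {..<n} \<longrightarrow> x A = 0}"

text \<open>e_A e_B = (-1)^{#(a,b) in A x B with b<a} (prod_{i in A cap B} eta i) e_{A symdiff B}\<close>
definition blade_sign :: "(nat \<Rightarrow> 'a::field) \<Rightarrow> nat set \<Rightarrow> nat set \<Rightarrow> 'a" where
  "blade_sign eta A B =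
     (-1) ^ card {(a, b). a \<in> A \<and> b \<in> B \<and> b < a} * (\<Prod>i\<in>A \<inter> B. eta i)"

definition cl_mult :: "nat \<Rightarrow> (nat \<Rightarrow> 'a::field) \<Rightarrow> (nat set \<Rightarrow> 'a) \<Rightarrow> (nat set \<Rightarrow> 'a) \<Rightarrow> (nat set \<Rightarrow> 'a)" where
  "cl_mult n eta x y = (\<lambda>C. if C \<subseteq> {..<n} then
      (\<Sum>A\<in>Pow {..<n}. \<Sum>B\<in>Pow {..<n}.
         if (A - B) \<union> (B - A) = C then x A * y B * blade_sign eta A B else 0)
     else 0)"

definition cl_one :: "nat set \<Rightarrow> 'a::field" where
  "cl_one = (\<lambda>A. if A = {} then 1 else 0)"

definition cl_grade :: "nat \<Rightarrow> nat \<Rightarrow> (nat set \<Rightarrow> 'a::field) set" where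
  "cl_grade n k = {x \<in> cl_carrier n. \<forall>A. card A \<noteq> k \<longrightarrow> x A = 0}"

definition cl_Gamma :: "nat \<Rightarrow> (nat \<Rightarrow> 'a::field) \<Rightarrow> nat \<Rightarrow> (nat set \<Rightarrow> 'a) set" where
  "cl_Gamma n eta k = {T \<in> cl_carrier n. \<exists>S \<in> cl_carrier n.
      cl_mult n eta T S = cl_one \<and> cl_mult n eta S T = cl_one \<and>
      (\<forall>X \<in> cl_grade n k. cl_mult n eta (cl_mult n eta T X) S \<in> cl_grade n k)}"

definition eta_real :: "nat \<Rightarrow> nat \<Rightarrow> real" where
  "eta_real p i = (if i < p then 1 else -1)"

definition eta_complex :: "nat \<Rightarrow> complex" where
  "eta_complex i = 1"

end

theory Submission
  imports Defs
begin

text \<open>Right multiplication by the pseudoscalar I = e_0 \<cdots> e_(n-1) maps C^k onto C^(n-k), and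
  I X = \<sigma> X I for X in C^k, where \<sigma> = (-1)^(k(n-1)). For T in \<Gamma>^k with 0 < k < n, the element
  Y = T\<inverse> I T satisfies the same relation Y X = \<sigma> X Y on C^k. Testing it against two grade-k
  blades that differ in a single index shows that only the components of Y along e and I can be
  nonzero; since Y^2 = I^2 is a nonzero scalar and T Y T\<inverse> = I, in fact Y = b I with b \<noteq> 0.
  Hence T I T\<inverse> is a multiple of I, so T (W I) T\<inverse> = (T W T\<inverse>) (T I T\<inverse>) lies in C^(n-k)
  for every W in C^k, i.e. \<Gamma>^k \<subseteq> \<Gamma>^(n-k); exchanging k and n - k gives equality.\<close>

lemma sym_diff_eq_iff: "sym_diff A B = C \<longleftrightarrow> B = sym_diff A C"
  by blast

lemma sym_diff_cancel_left [simp]: "sym_diff A (sym_diff A C) = C"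
  by blast

lemma blade_sign_empty_left [simp]: "blade_sign eta {} B = 1"
  by (simp add: blade_sign_def)

lemma blade_sign_empty_right [simp]: "blade_sign eta A {} = 1"
  by (simp add: blade_sign_def)

lemma blade_sign_nonzero:
  fixes eta :: "nat \<Rightarrow> 'a::field"
  assumes "\<And>i. eta i \<noteq> 0"
  shows "blade_sign eta A B \<noteq> 0"
  using assms by (cases "finite (A \<inter> B)") (simp_all add: blade_sign_def)

lemma blade_sign_as_prod:
  fixes eta :: "nat \<Rightarrow> 'a::field"
  assumes "finite U" "A \<subseteq> U" "B \<subseteq> U"
  shows "blade_sign eta A B =
    (\<Prod>p\<in>U \<times> U. if fst p \<in> A \<and> snd p \<in> B \<and> snd p < fst p then -1 else 1) *
    (\<Prod>i\<in>U. if i \<in> A \<and> i \<in> B then eta i else 1)"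
proof -
  have "{(a, b). a \<in> A \<and> b \<in> B \<and> b < a} = (U \<times> U) \<inter> {p. fst p \<in> A \<and> snd p \<in> B \<and> snd p < fst p}"
    "A \<inter> B = U \<inter> {i. i \<in> A \<and> i \<in> B}"
    using assms by auto
  then show ?thesis
    using assms by (simp add: blade_sign_def prod.If_cases)
qed

text \<open>The blade sign is a 2-cocycle for symmetric difference; this is exactly associativity
  of the product on basis blades.\<close>

lemma blade_sign_cocycle:
  fixes eta :: "nat \<Rightarrow> 'a::field"
  assumes "finite A" "finite B" "finite E"
  shows "blade_sign eta A B * blade_sign eta (sym_diff A B) E =
         blade_sign eta B E * blade_sign eta A (sym_diff B E)"
proof -
  define U where "U = A \<union> B \<union> E"
  have U: "finite U" "A \<subseteq> U" "B \<subseteq> U" "E \<subseteq> U" "sym_diff A B \<subseteq> U" "sym_diff B E \<subseteq> U"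
    using assms by (auto simp: U_def)
  have signs: "(\<Prod>p\<in>U \<times> U. if fst p \<in> A \<and> snd p \<in> B \<and> snd p < fst p then -1 else (1::'a)) *
      (\<Prod>p\<in>U \<times> U. if fst p \<in> sym_diff A B \<and> snd p \<in> E \<and> snd p < fst p then -1 else 1)
    = (\<Prod>p\<in>U \<times> U. if fst p \<in> B \<and> snd p \<in> E \<and> snd p < fst p then -1 else 1) *
      (\<Prod>p\<in>U \<times> U. if fst p \<in> A \<and> snd p \<in> sym_diff B E \<and> snd p < fst p then -1 else 1)"
    unfolding prod.distrib[symmetric] by (rule prod.cong) auto
  have metric: "(\<Prod>i\<in>U. if i \<in> A \<and> i \<in> B then eta i else 1) *
      (\<Prod>i\<in>U. if i \<in> sym_diff A B \<and> i \<in> E then eta i else 1)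
    = (\<Prod>i\<in>U. if i \<in> B \<and> i \<in> E then eta i else 1) *
      (\<Prod>i\<in>U. if i \<in> A \<and> i \<in> sym_diff B E then eta i else 1)"
    unfolding prod.distrib[symmetric] by (rule prod.cong) auto
  have swap: "(a * b) * (c * d) = (a * c) * (b * d)" for a b c d :: 'a
    by (simp add: mult_ac)
  show ?thesis
    unfolding blade_sign_as_prod[OF U(1,2,3)] blade_sign_as_prod[OF U(1,5,4)]
      blade_sign_as_prod[OF U(1,3,4)] blade_sign_as_prod[OF U(1,2,6)]
    by (subst (1 2) swap) (simp only: signs metric)
qed

definition inversions :: "nat set \<Rightarrow> nat set \<Rightarrow> nat" where
  "inversions A B = card {(a, b). a \<in> A \<and> b \<in> B \<and> b < a}"

lemma inversions_add_inversions:
  assumes "finite A" "finite B"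
  shows "inversions A B + inversions B A + card (A \<inter> B) = card A * card B"
proof -
  let ?X = "{(a, b). a \<in> A \<and> b \<in> B \<and> b < a}"
  let ?Y = "{(a, b). a \<in> A \<and> b \<in> B \<and> a < b}"
  let ?Z = "{(a, b). a \<in> A \<and> b \<in> B \<and> a = b}"
  have fin: "finite ?X" "finite ?Y" "finite ?Z"
    by (rule finite_subset[of _ "A \<times> B"]; use assms in auto)+
  have "card ?Y = inversions B A"
  proof -
    have "?Y = prod.swap ` {(a, b). a \<in> B \<and> b \<in> A \<and> b < a}"
      by auto
    then show ?thesis
      by (simp add: inversions_def card_image)
  qed
  moreover have "card ?Z = card (A \<inter> B)"
  proof -
    have "?Z = (\<lambda>a. (a, a)) ` (A \<inter> B)"
      by auto
    then show ?thesis
      by (simp add: card_image inj_on_def)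
  qed
  moreover have "card A * card B = card ?X + card ?Y + card ?Z"
  proof -
    have "A \<times> B = (?X \<union> ?Y) \<union> ?Z" "?X \<inter> ?Y = {}" "(?X \<union> ?Y) \<inter> ?Z = {}"
      by auto
    then show ?thesis
      using fin by (simp add: card_Un_disjoint flip: card_cartesian_product)
  qed
  ultimately show ?thesis
    by (simp add: inversions_def)
qed

lemma blade_sign_swap:
  fixes eta :: "nat \<Rightarrow> 'a::field"
  assumes "finite A" "finite B"
  shows "blade_sign eta B A = (-1) ^ (card A * card B - card (A \<inter> B)) * blade_sign eta A B"
proof -
  have "card A * card B - card (A \<inter> B) = inversions A B + inversions B A"
    using inversions_add_inversions[OF assms] by linarith
  moreover have "(-1::'a) ^ (inversions A B + inversions B A) * (-1) ^ inversions A B =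
      (-1) ^ inversions B A"
  proof -
    have "(-1::'a) ^ (2 * inversions A B + inversions B A) = (-1) ^ inversions B A"
      by (simp add: power_add power_mult)
    then show ?thesis
      by (simp add: mult_2 power_add mult_ac)
  qed
  ultimately show ?thesis
    by (simp add: blade_sign_def inversions_def[symmetric] Int_commute mult.assoc[symmetric])
qed

definition cl_blade :: "nat set \<Rightarrow> nat set \<Rightarrow> 'a::field" where
  "cl_blade A = (\<lambda>C. if C = A then 1 else 0)"

definition cl_scale :: "'a::field \<Rightarrow> (nat set \<Rightarrow> 'a) \<Rightarrow> nat set \<Rightarrow> 'a" where
  "cl_scale c x = (\<lambda>A. c * x A)"

abbreviation cl_pseudoscalar :: "nat \<Rightarrow> nat set \<Rightarrow> 'a::field" where
  "cl_pseudoscalar n \<equiv> cl_blade {..<n}"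

lemma cl_one_eq_blade_empty: "cl_one = cl_blade {}"
  unfolding cl_one_def cl_blade_def by auto

lemma cl_eq_scale_blade:
  assumes "\<And>B. B \<noteq> A \<Longrightarrow> Y B = 0"
  shows "Y = cl_scale (Y A) (cl_blade A)"
  using assms by (auto simp: fun_eq_iff cl_scale_def cl_blade_def)

lemma cl_scale_scale [simp]: "cl_scale a (cl_scale b x) = cl_scale (a * b) x"
  by (simp add: cl_scale_def mult_ac)

lemma cl_scale_one [simp]: "cl_scale 1 x = x"
  by (simp add: cl_scale_def)

lemma cl_blade_in_grade: "A \<subseteq> {..<n} \<Longrightarrow> card A = k \<Longrightarrow> cl_blade A \<in> cl_grade n k"
  by (auto simp: cl_grade_def cl_carrier_def cl_blade_def)

lemma cl_scale_in_grade: "X \<in> cl_grade n k \<Longrightarrow> cl_scale c X \<in> cl_grade n k"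
  by (simp add: cl_grade_def cl_carrier_def cl_scale_def)

lemma cl_grade_carrier: "X \<in> cl_grade n k \<Longrightarrow> X \<in> cl_carrier n"
  by (simp add: cl_grade_def)

context
  fixes n :: nat and eta :: "nat \<Rightarrow> 'a::field"
begin

abbreviation cl_times (infixl "\<odot>" 70) where
  "x \<odot> y \<equiv> cl_mult n eta x y"

lemma cl_mult_apply:
  "(x \<odot> y) C = (if C \<subseteq> {..<n} then
     (\<Sum>A\<in>Pow {..<n}. x A * y (sym_diff A C) * blade_sign eta A (sym_diff A C)) else 0)"
proof (cases "C \<subseteq> {..<n}")
  case True
  have "(\<Sum>B\<in>Pow {..<n}. if sym_diff A B = C then x A * y B * blade_sign eta A B else 0)
      = x A * y (sym_diff A C) * blade_sign eta A (sym_diff A C)" if "A \<in> Pow {..<n}" for A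
  proof -
    have "sym_diff A C \<in> Pow {..<n}"
      using that True by blast
    then show ?thesis
      by (simp add: sym_diff_eq_iff sum.delta' del: Un_iff)
  qed
  then show ?thesis
    using True unfolding cl_mult_def by simp
qed (simp add: cl_mult_def)

lemma cl_mult_carrier: "x \<odot> y \<in> cl_carrier n"
  unfolding cl_carrier_def cl_mult_def by auto

lemma cl_mult_mult_left_apply:
  assumes "D \<subseteq> {..<n}"
  shows "(x \<odot> y \<odot> z) D = (\<Sum>A\<in>Pow {..<n}. \<Sum>B\<in>Pow {..<n}.
    x A * y B * z (sym_diff B (sym_diff A D)) *
      (blade_sign eta A B * blade_sign eta (sym_diff A B) (sym_diff B (sym_diff A D))))"
proof -
  let ?P = "Pow {..<n}"
  let ?s = "blade_sign eta"
  have "(x \<odot> y \<odot> z) D =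
    (\<Sum>C\<in>?P. (\<Sum>A\<in>?P. x A * y (sym_diff A C) * ?s A (sym_diff A C)) *
       z (sym_diff C D) * ?s C (sym_diff C D))"
    using assms by (simp add: cl_mult_apply)
  also have "\<dots> = (\<Sum>C\<in>?P. \<Sum>A\<in>?P. x A * y (sym_diff A C) * z (sym_diff C D) *
       (?s A (sym_diff A C) * ?s C (sym_diff C D)))"
    unfolding sum_distrib_right by (simp add: mult_ac)
  also have "\<dots> = (\<Sum>A\<in>?P. \<Sum>B\<in>?P. x A * y B * z (sym_diff (sym_diff A B) D) *
       (?s A B * ?s (sym_diff A B) (sym_diff (sym_diff A B) D)))"
  proof (subst sum.swap, rule sum.cong[OF refl])
    fix A assume "A \<in> ?P"
    then show "(\<Sum>C\<in>?P. x A * y (sym_diff A C) * z (sym_diff C D) *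
          (?s A (sym_diff A C) * ?s C (sym_diff C D))) =
        (\<Sum>B\<in>?P. x A * y B * z (sym_diff (sym_diff A B) D) *
          (?s A B * ?s (sym_diff A B) (sym_diff (sym_diff A B) D)))"
      by (intro sum.reindex_bij_witness[where i="sym_diff A" and j="sym_diff A"]) auto
  qed
  also have "\<dots> = (\<Sum>A\<in>?P. \<Sum>B\<in>?P. x A * y B * z (sym_diff B (sym_diff A D)) *
       (?s A B * ?s (sym_diff A B) (sym_diff B (sym_diff A D))))"
  proof -
    have "sym_diff (sym_diff A B) D = sym_diff B (sym_diff A D)" for A B :: "nat set"
      by blast
    then show ?thesis
      by simp
  qed
  finally show ?thesis .
qed

lemma cl_mult_mult_right_apply:
  assumes "D \<subseteq> {..<n}"
  shows "(x \<odot> (y \<odot> z)) D = (\<Sum>A\<in>Pow {..<n}. \<Sum>B\<in>Pow {..<n}.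
    x A * y B * z (sym_diff B (sym_diff A D)) *
      (blade_sign eta B (sym_diff B (sym_diff A D)) * blade_sign eta A (sym_diff A D)))"
proof -
  have "(x \<odot> (y \<odot> z)) D = (\<Sum>A\<in>Pow {..<n}. x A *
      (\<Sum>B\<in>Pow {..<n}. y B * z (sym_diff B (sym_diff A D)) * blade_sign eta B (sym_diff B (sym_diff A D))) *
      blade_sign eta A (sym_diff A D))"
    using assms by (auto simp: cl_mult_apply intro!: sum.cong)
  then show ?thesis
    by (simp add: sum_distrib_left sum_distrib_right mult_ac)
qed

lemma cl_mult_assoc: "x \<odot> y \<odot> z = x \<odot> (y \<odot> z)"
proof
  fix D
  show "(x \<odot> y \<odot> z) D = (x \<odot> (y \<odot> z)) D"
  proof (cases "D \<subseteq> {..<n}")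
    case True
    have "blade_sign eta A B * blade_sign eta (sym_diff A B) (sym_diff B (sym_diff A D)) =
        blade_sign eta B (sym_diff B (sym_diff A D)) * blade_sign eta A (sym_diff A D)"
      if "A \<in> Pow {..<n}" "B \<in> Pow {..<n}" for A B
    proof -
      have "finite A" "finite B" "finite (sym_diff B (sym_diff A D))"
        using that True by (auto intro: finite_subset)
      from blade_sign_cocycle[OF this, of eta] show ?thesis
        by simp
    qed
    then show ?thesis
      using True by (simp add: cl_mult_mult_left_apply cl_mult_mult_right_apply)
  qed (simp add: cl_mult_apply)
qed

lemma cl_mult_scale_left: "cl_scale c x \<odot> y = cl_scale c (x \<odot> y)"
  by (rule ext) (simp add: cl_mult_apply cl_scale_def sum_distrib_left mult_ac)

lemma cl_mult_scale_right: "x \<odot> cl_scale c y = cl_scale c (x \<odot> y)"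
  by (rule ext) (simp add: cl_mult_apply cl_scale_def sum_distrib_left mult_ac)

lemma cl_mult_blade_left:
  "(cl_blade A \<odot> y) C =
    (if C \<subseteq> {..<n} \<and> A \<subseteq> {..<n} then y (sym_diff A C) * blade_sign eta A (sym_diff A C) else 0)"
proof -
  have "(\<Sum>A'\<in>Pow {..<n}. cl_blade A A' * y (sym_diff A' C) * blade_sign eta A' (sym_diff A' C)) =
      (\<Sum>A'\<in>Pow {..<n}. if A' = A then y (sym_diff A' C) * blade_sign eta A' (sym_diff A' C) else 0)"
    by (intro sum.cong) (auto simp: cl_blade_def)
  then show ?thesis
    by (simp add: cl_mult_apply sum.delta')
qed

lemma cl_mult_blade_right:
  "(x \<odot> cl_blade B) C =
    (if C \<subseteq> {..<n} \<and> B \<subseteq> {..<n} then x (sym_diff C B) * blade_sign eta (sym_diff C B) B else 0)"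
proof (cases "C \<subseteq> {..<n}")
  case True
  have "(\<Sum>A\<in>Pow {..<n}. x A * cl_blade B (sym_diff A C) * blade_sign eta A (sym_diff A C)) =
        (\<Sum>A\<in>Pow {..<n}. if A = sym_diff C B then x A * blade_sign eta A B else 0)"
    by (rule sum.cong) (auto simp: cl_blade_def)
  moreover have "sym_diff C B \<in> Pow {..<n} \<longleftrightarrow> B \<subseteq> {..<n}"
    using True by blast
  ultimately show ?thesis
    using True by (simp add: cl_mult_apply sum.delta')
qed (simp add: cl_mult_apply)

lemma cl_mult_one_left: "x \<in> cl_carrier n \<Longrightarrow> cl_one \<odot> x = x"
  by (rule ext) (auto simp: cl_one_eq_blade_empty cl_mult_blade_left cl_carrier_def)

lemma cl_mult_one_right: "x \<in> cl_carrier n \<Longrightarrow> x \<odot> cl_one = x"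
  by (rule ext) (auto simp: cl_one_eq_blade_empty cl_mult_blade_right cl_carrier_def)

lemma cl_mult_conj:
  assumes "T \<odot> U = cl_one"
  shows "(U \<odot> X \<odot> T) \<odot> (U \<odot> Y \<odot> T) = U \<odot> (X \<odot> Y) \<odot> T"
proof -
  have "(U \<odot> X \<odot> T) \<odot> (U \<odot> Y \<odot> T) = U \<odot> (X \<odot> ((T \<odot> U) \<odot> (Y \<odot> T)))"
    by (simp only: cl_mult_assoc)
  also have "\<dots> = U \<odot> (X \<odot> Y) \<odot> T"
    using assms by (simp add: cl_mult_one_left cl_mult_carrier cl_mult_assoc)
  finally show ?thesis .
qed

lemma cl_mult_pseudoscalar_grade:
  assumes X: "X \<in> cl_grade n j" and "j \<le> n"
  shows "X \<odot> cl_pseudoscalar n \<in> cl_grade n (n - j)"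
  unfolding cl_grade_def
proof (intro CollectI conjI allI impI cl_mult_carrier)
  fix A :: "nat set"
  assume card_A: "card A \<noteq> n - j"
  show "(X \<odot> cl_pseudoscalar n) A = 0"
  proof (cases "A \<subseteq> {..<n}")
    case True
    then have "sym_diff A {..<n} = {..<n} - A"
      by blast
    with True have "card (sym_diff A {..<n}) = n - card A" "card A \<le> n"
      by (simp_all add: card_Diff_subset finite_subset card_mono[of "{..<n}", simplified])
    then have "X (sym_diff A {..<n}) = 0"
      using X card_A \<open>j \<le> n\<close> by (simp add: cl_grade_def)
    then show ?thesis
      by (simp add: cl_mult_blade_right)
  qed (simp add: cl_mult_blade_right)
qed

lemma cl_pseudoscalar_square:
  "cl_pseudoscalar n \<odot> cl_pseudoscalar n = cl_scale (blade_sign eta {..<n} {..<n}) cl_one"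
proof
  fix C :: "nat set"
  have "sym_diff C {..<n} = {..<n} \<longleftrightarrow> C = {}"
    by blast
  then show "(cl_pseudoscalar n \<odot> cl_pseudoscalar n) C =
      cl_scale (blade_sign eta {..<n} {..<n}) cl_one C"
    unfolding cl_mult_blade_right cl_scale_def cl_one_def
    by (cases "C = {}") (simp_all add: cl_blade_def)
qed

lemma cl_pseudoscalar_commute_grade:
  assumes X: "X \<in> cl_grade n k"
  shows "cl_pseudoscalar n \<odot> X = cl_scale ((-1) ^ (k * n - k)) (X \<odot> cl_pseudoscalar n)"
proof
  fix C
  define D where "D = sym_diff C {..<n}"
  have D_commute: "sym_diff {..<n} C = D"
    unfolding D_def by blast
  show "(cl_pseudoscalar n \<odot> X) C = cl_scale ((-1) ^ (k * n - k)) (X \<odot> cl_pseudoscalar n) C"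
  proof (cases "C \<subseteq> {..<n} \<and> X D \<noteq> 0")
    case True
    then have "D \<subseteq> {..<n}" "card D = k"
      using X by (auto simp: cl_grade_def cl_carrier_def)
    then have "blade_sign eta {..<n} D = (-1) ^ (k * n - k) * blade_sign eta D {..<n}"
      using blade_sign_swap[of D "{..<n}" eta] by (simp add: Int_absorb2 finite_subset)
    then show ?thesis
      using True by (simp add: cl_mult_blade_right cl_mult_blade_left D_commute
          cl_scale_def flip: D_def)
  next
    case False
    then show ?thesis
      by (auto simp: cl_mult_blade_right cl_mult_blade_left D_commute cl_scale_def simp flip: D_def)
  qed
qed

lemma cl_mult_self_full_coeff:
  assumes "n \<noteq> 0" and Y_zero: "\<And>B. B \<noteq> {} \<Longrightarrow> B \<noteq> {..<n} \<Longrightarrow> Y B = 0"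
  shows "(Y \<odot> Y) {..<n} = 2 * Y {} * Y {..<n}"
proof -
  let ?f = "\<lambda>A. Y A * Y (sym_diff A {..<n}) * blade_sign eta A (sym_diff A {..<n})"
  have "(Y \<odot> Y) {..<n} = (\<Sum>A\<in>Pow {..<n}. ?f A)"
    by (simp add: cl_mult_apply)
  also have "\<dots> = (\<Sum>A\<in>{{}, {..<n}}. ?f A)"
    by (rule sum.mono_neutral_right) (auto simp: Y_zero)
  also have "\<dots> = Y {} * Y {..<n} + Y {..<n} * Y {}"
  proof -
    have "{..<n} \<noteq> {}"
      using \<open>n \<noteq> 0\<close> by auto
    then show ?thesis
      by simp
  qed
  finally show ?thesis
    by simp
qed

lemma twisted_commute_blade_sign:
  assumes nz: "\<And>i. eta i \<noteq> 0" and "Y B \<noteq> 0" and "finite B"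
    and twist: "\<And>X. X \<in> cl_grade n k \<Longrightarrow> Y \<odot> X = cl_scale \<sigma> (X \<odot> Y)"
    and A: "A \<subseteq> {..<n}" "card A = k" and "B \<subseteq> {..<n}"
  shows "(-1) ^ (k * card B - card (A \<inter> B)) = \<sigma>"
proof -
  have "(Y \<odot> cl_blade A) (sym_diff B A) = cl_scale \<sigma> (cl_blade A \<odot> Y) (sym_diff B A)"
    using twist[OF cl_blade_in_grade[OF A]] by simp
  moreover have "sym_diff (sym_diff B A) A = B" "sym_diff A (sym_diff B A) = B"
    "sym_diff B A \<subseteq> {..<n}"
    using A \<open>B \<subseteq> {..<n}\<close> by blast+
  ultimately have eq: "Y B * blade_sign eta B A = \<sigma> * (Y B * blade_sign eta A B)"
    using A(1) unfolding cl_mult_blade_right cl_mult_blade_left cl_scale_def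
    by (simp only: simp_thms if_True)
  have "finite A"
    using A(1) finite_subset by blast
  then have swap: "blade_sign eta B A = (-1) ^ (k * card B - card (A \<inter> B)) * blade_sign eta A B"
    using blade_sign_swap[of A B eta] \<open>finite B\<close> A(2) by simp
  have "(-1) ^ (k * card B - card (A \<inter> B)) * (Y B * blade_sign eta A B) =
      \<sigma> * (Y B * blade_sign eta A B)"
    using eq unfolding swap by (simp only: mult_ac)
  then show ?thesis
    using \<open>Y B \<noteq> 0\<close> blade_sign_nonzero[OF nz] by simp
qed

text \<open>The grade-k blades e_(A0 \<union> {b}) and e_(A0 \<union> {c}) with b \<in> B and c \<notin> B meet B in sets
  whose sizes differ by one, so they would force \<sigma> = -\<sigma>.\<close>

lemma twisted_commutant_support:
  assumes two: "(2::'a) \<noteq> 0" and nz: "\<And>i. eta i \<noteq> 0"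
    and Y: "Y \<in> cl_carrier n" and k: "1 \<le> k" "k < n"
    and twist: "\<And>X. X \<in> cl_grade n k \<Longrightarrow> Y \<odot> X = cl_scale \<sigma> (X \<odot> Y)"
    and B: "B \<noteq> {}" "B \<noteq> {..<n}"
  shows "Y B = 0"
proof (rule ccontr)
  assume "Y B \<noteq> 0"
  then have B_sub: "B \<subseteq> {..<n}"
    using Y by (auto simp: cl_carrier_def)
  then have "finite B"
    using finite_subset by blast
  have sign_eq: "(-1) ^ (k * card B - card (A \<inter> B)) = \<sigma>" if "A \<subseteq> {..<n}" "card A = k" for A
    by (rule twisted_commute_blade_sign[where Y = Y and B = B, OF nz \<open>Y B \<noteq> 0\<close> \<open>finite B\<close>])
      (simp_all add: twist that B_sub)
  obtain b c where bc: "b \<in> B" "c \<in> {..<n}" "c \<notin> B"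
    using B B_sub by blast
  then have "card ({..<n} - {b, c}) = n - 2"
    using B_sub by (subst card_Diff_subset) (auto simp: card_insert_if)
  then have "k - 1 \<le> card ({..<n} - {b, c})"
    using k by linarith
  then obtain A0 where A0: "A0 \<subseteq> {..<n} - {b, c}" "card A0 = k - 1" "finite A0"
    by (rule obtain_subset_with_card_n)
  define A1 where "A1 = insert b A0"
  define A2 where "A2 = insert c A0"
  have "b \<notin> A0" "c \<notin> A0"
    using A0(1) by blast+
  then have A1: "A1 \<subseteq> {..<n}" "card A1 = k" and A2: "A2 \<subseteq> {..<n}" "card A2 = k"
    using A0 bc B_sub k by (auto simp: A1_def A2_def)
  have "A1 \<inter> B = insert b (A2 \<inter> B)" "b \<notin> A2 \<inter> B"
    using bc A0 by (auto simp: A1_def A2_def)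
  then have card_Int: "card (A1 \<inter> B) = Suc (card (A2 \<inter> B))"
    using \<open>finite B\<close> by simp
  have "card (A1 \<inter> B) \<le> card A1"
    using A1(1) by (intro card_mono) (auto intro: finite_subset)
  also have "\<dots> \<le> k * card B"
    using A1(2) B(1) \<open>finite B\<close> by (simp add: Suc_le_eq card_gt_0_iff)
  finally have "k * card B - card (A2 \<inter> B) = Suc (k * card B - card (A1 \<inter> B))"
    using card_Int by linarith
  then have "2 * \<sigma> = 0"
    using sign_eq[OF A1] sign_eq[OF A2] by simp
  then show False
    using sign_eq[OF A1] two by simp
qed

lemma conj_pseudoscalar_twisted_commute:
  assumes UT: "U \<odot> T = cl_one"
    and conj: "\<And>X. X \<in> cl_grade n k \<Longrightarrow> T \<odot> X \<odot> U \<in> cl_grade n k"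
    and X: "X \<in> cl_grade n k"
  shows "(U \<odot> cl_pseudoscalar n \<odot> T) \<odot> X = cl_scale ((-1) ^ (k * n - k)) (X \<odot> (U \<odot> cl_pseudoscalar n \<odot> T))"
proof -
  define Z where "Z = T \<odot> X \<odot> U"
  have "Z \<in> cl_grade n k"
    using conj X by (simp add: Z_def)
  have ZT: "Z \<odot> T = T \<odot> X"
    using X by (simp add: Z_def cl_mult_assoc UT cl_mult_one_right cl_grade_carrier)
  have UZ: "U \<odot> Z = X \<odot> U"
    using X by (simp add: Z_def flip: cl_mult_assoc) (simp add: UT cl_mult_one_left cl_grade_carrier)
  have "(U \<odot> cl_pseudoscalar n \<odot> T) \<odot> X = U \<odot> (cl_pseudoscalar n \<odot> Z) \<odot> T"
    by (simp add: cl_mult_assoc flip: ZT)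
  also have "\<dots> = cl_scale ((-1) ^ (k * n - k)) (U \<odot> Z \<odot> cl_pseudoscalar n \<odot> T)"
    using \<open>Z \<in> cl_grade n k\<close>
    by (simp add: cl_pseudoscalar_commute_grade cl_mult_scale_left cl_mult_scale_right cl_mult_assoc)
  finally show ?thesis
    by (simp add: UZ cl_mult_assoc)
qed

lemma conj_pseudoscalar_eq_scale:
  assumes two: "(2::'a) \<noteq> 0" and nz: "\<And>i. eta i \<noteq> 0" and k: "1 \<le> k" "k < n"
    and T: "T \<in> cl_carrier n" and U: "U \<in> cl_carrier n"
    and TU: "T \<odot> U = cl_one" and UT: "U \<odot> T = cl_one"
    and conj: "\<And>X. X \<in> cl_grade n k \<Longrightarrow> T \<odot> X \<odot> U \<in> cl_grade n k"
  shows "\<exists>c. T \<odot> cl_pseudoscalar n \<odot> U = cl_scale c (cl_pseudoscalar n)"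
proof -
  let ?I = "cl_pseudoscalar n :: nat set \<Rightarrow> 'a"
  define Y where "Y = U \<odot> ?I \<odot> T"
  define a where "a = Y {}"
  define b where "b = Y {..<n}"
  have "n \<noteq> 0" "{..<n} \<noteq> {}"
    using k by auto
  have Y_zero: "Y B = 0" if "B \<noteq> {}" "B \<noteq> {..<n}" for B
    using twisted_commutant_support[OF two nz _ k conj_pseudoscalar_twisted_commute[OF UT conj] that]
    by (simp add: Y_def cl_mult_carrier)
  have "T \<odot> Y \<odot> U = (T \<odot> U) \<odot> ?I \<odot> (T \<odot> U)"
    by (simp only: Y_def cl_mult_assoc)
  then have TYU: "T \<odot> Y \<odot> U = ?I"
    using TU by (simp add: cl_mult_one_left cl_mult_one_right cl_carrier_def cl_blade_def)
  have "Y \<odot> Y = cl_scale (blade_sign eta {..<n} {..<n}) cl_one"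
    using cl_mult_conj[OF TU, of ?I ?I] U UT
    by (simp add: Y_def cl_pseudoscalar_square cl_mult_scale_left cl_mult_scale_right cl_mult_one_right)
  then have "2 * a * b = 0"
    using cl_mult_self_full_coeff[where Y = Y, OF \<open>n \<noteq> 0\<close> Y_zero] \<open>{..<n} \<noteq> {}\<close>
    by (simp add: a_def b_def cl_scale_def cl_one_def)
  moreover have "b \<noteq> 0"
  proof
    assume "b = 0"
    then have "Y = cl_scale a cl_one"
      using cl_eq_scale_blade[of "{}" Y] Y_zero by (auto simp: a_def b_def cl_one_eq_blade_empty)
    then have "T \<odot> Y \<odot> U = cl_scale a cl_one"
      using T U TU by (simp add: cl_mult_scale_left cl_mult_scale_right cl_mult_one_left cl_mult_one_right)
    then show False
      using TYU \<open>{..<n} \<noteq> {}\<close> by (metis cl_blade_def cl_one_def cl_scale_def mult_zero_right zero_neq_one)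
  qed
  ultimately have "a = 0"
    using two by simp
  then have "Y = cl_scale b ?I"
    unfolding b_def by (intro cl_eq_scale_blade) (metis Y_zero a_def)
  then have "cl_scale b (T \<odot> ?I \<odot> U) = ?I"
    using TYU by (simp add: cl_mult_scale_left cl_mult_scale_right)
  then have "T \<odot> ?I \<odot> U = cl_scale (1 / b) ?I"
    using \<open>b \<noteq> 0\<close> by (metis cl_scale_scale cl_scale_one nonzero_divide_eq_eq mult.commute)
  then show ?thesis ..
qed

lemma cl_Gamma_subset_complement:
  assumes two: "(2::'a) \<noteq> 0" and nz: "\<And>i. eta i \<noteq> 0" and k: "1 \<le> k" "k < n"
  shows "cl_Gamma n eta k \<subseteq> cl_Gamma n eta (n - k)"
proof
  fix T
  assume "T \<in> cl_Gamma n eta k"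
  then obtain U where T: "T \<in> cl_carrier n" and U: "U \<in> cl_carrier n"
    and TU: "T \<odot> U = cl_one" and UT: "U \<odot> T = cl_one"
    and conj: "\<And>X. X \<in> cl_grade n k \<Longrightarrow> T \<odot> X \<odot> U \<in> cl_grade n k"
    unfolding cl_Gamma_def by blast
  let ?I = "cl_pseudoscalar n :: nat set \<Rightarrow> 'a"
  let ?\<epsilon> = "blade_sign eta {..<n} {..<n}"
  obtain c where TIU: "T \<odot> ?I \<odot> U = cl_scale c ?I"
    using conj_pseudoscalar_eq_scale[OF two nz k T U TU UT conj] by blast
  have "T \<odot> X \<odot> U \<in> cl_grade n (n - k)" if X: "X \<in> cl_grade n (n - k)" for X
  proof -
    define W where "W = cl_scale (1 / ?\<epsilon>) (X \<odot> ?I)"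
    have W: "W \<in> cl_grade n k"
      unfolding W_def using cl_mult_pseudoscalar_grade[OF X] k by (auto intro: cl_scale_in_grade)
    have "W \<odot> ?I = X"
      using X blade_sign_nonzero[OF nz, where A = "{..<n}" and B = "{..<n}"]
      by (simp add: W_def cl_mult_scale_left cl_mult_assoc cl_pseudoscalar_square
          cl_mult_scale_right cl_mult_one_right cl_grade_carrier)
    then have "T \<odot> X \<odot> U = (T \<odot> W \<odot> U) \<odot> (T \<odot> ?I \<odot> U)"
      using cl_mult_conj[OF UT, of W ?I] by simp
    also have "\<dots> = cl_scale c ((T \<odot> W \<odot> U) \<odot> ?I)"
      by (simp add: TIU cl_mult_scale_right)
    finally show ?thesis
      using cl_mult_pseudoscalar_grade[OF conj[OF W]] k by (auto intro: cl_scale_in_grade)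
  qed
  then show "T \<in> cl_Gamma n eta (n - k)"
    unfolding cl_Gamma_def using T U TU UT by blast
qed

end

lemma cl_Gamma_complement:
  fixes eta :: "nat \<Rightarrow> 'a::field"
  assumes "(2::'a) \<noteq> 0" and "\<And>i. eta i \<noteq> 0" and "1 \<le> k" "k < n"
  shows "cl_Gamma n eta k = cl_Gamma n eta (n - k)"
  using cl_Gamma_subset_complement[where eta = eta and n = n, OF assms]
    cl_Gamma_subset_complement[where eta = eta and n = n and k = "n - k", OF assms(1,2)] assms(3,4)
  by auto

theorem mainTheorem13:
  fixes n :: nat
  assumes "n \<ge> 2"
  shows "(\<forall>p q k. p + q = n \<longrightarrow> 1 \<le> k \<longrightarrow> k \<le> n - 1 \<longrightarrow>
            cl_Gamma n (eta_real p) k = cl_Gamma n (eta_real p) (n - k))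
       \<and> (\<forall>k. 1 \<le> k \<longrightarrow> k \<le> n - 1 \<longrightarrow>
            cl_Gamma n eta_complex k = cl_Gamma n eta_complex (n - k))"
  using assms by (intro conjI allI impI cl_Gamma_complement) (auto simp: eta_real_def eta_complex_def)

end
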